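(* Let $N\ge2$, $\Lambda_0>0$, and let $\lambda:\mathbb R\to[0,\Lambda_0]$ be a nonincreasing measurable function. Let $c_1,c_2>0$ satisfy $c_1\Lambda_0\le1/2$ and $c_2\Lambda_0\le(N-1)/2$, and put $M=N-c_2\Lambda_0$. Then for all $s,t\in\mathbb R$, $$\int_{-\infty}^\infty\!\int_{-\infty}^\infty E(t,\tau,\sigma)\,\Sigma^+(s,\sigma)\,d\sigma\,d\tau\le c\,\Sigma^+(s,t),\qquad \int_{-\infty}^\infty\!\int_{-\infty}^\infty E(t,\tau,\sigma)\,\Sigma^-(\sigma,s)\,d\sigma\,d\tau\le c\,\Sigma^-(t,s),$$ where $c=2\big(\frac{3\Lambda_0}{M}+\frac1{c_1}+\frac1{c_2}\big)^2$.
   Context: For $m,n\ge0$, $Q^{m,n}(t)=t^m$ for $0<t\le1$ and $Q^{m,n}(t)=t^n$ for $t>1$. Define $E(\tau,\sigma)=\lambda(\tau)^2e^{N(\tau-\sigma)}$ if $\tau\le\sigma$ and $E(\tau,\sigma)=\lambda(\tau)\big(\lambda(\tau)e^{\sigma-\tau}+\lambda(\sigma)\big)$ if $\tau\ge\sigma$, and $E(t,\tau,\sigma)=Q^{N,0}(e^{t-\tau})\,E(\tau,\sigma)$. Define $\Sigma^{\pm}(s,\sigma)=\exp\big(\pm c_1\int_s^\sigma\lambda(\nu)\,d\nu\big)$ if $s\le\sigma$ and $\Sigma^{\pm}(s,\sigma)=\exp\big(\pm M(\sigma-s)\big)$ if $s\ge\sigma$. (In the paper $\lambda(\nu)=\Lambda(e^{-\nu})$,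 where $\Lambda$ is an increasing local Lipschitz modulus bounded by $\Lambda_0$.) *)

theory Defs
  imports "HOL-Analysis.Analysis"
begin

text \<open>Q^{m,n}(t) = t^m for 0 < t <= 1 and t^n for t > 1 (only used for t > 0).\<close>
definition Qmn :: "nat \<Rightarrow> nat \<Rightarrow> real \<Rightarrow> real" where
  "Qmn m n t = (if t \<le> 1 then t ^ m else t ^ n)"

definition Ekern :: "nat \<Rightarrow> (real \<Rightarrow> real) \<Rightarrow> real \<Rightarrow> real \<Rightarrow> real" where
  "Ekern N lam \<tau> \<sigma> =
     (if \<tau> \<le> \<sigma> then (lam \<tau>)\<^sup>2 * exp (real N * (\<tau> - \<sigma>))
      else lam \<tau> * (lam \<tau> * exp (\<sigma> - \<tau>) + lam \<sigma>))"

definition Ekern3 :: "nat \<Rightarrow> (real \<Rightarrow> real) \<Rightarrow> real \<Rightarrow> real \<Rightarrow> real \<Rightarrow> real" where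
  "Ekern3 N lam t \<tau> \<sigma> = Qmn N 0 (exp (t - \<tau>)) * Ekern N lam \<tau> \<sigma>"

definition SigmaP :: "real \<Rightarrow> real \<Rightarrow> (real \<Rightarrow> real) \<Rightarrow> real \<Rightarrow> real \<Rightarrow> real" where
  "SigmaP c1 M lam s \<sigma> =
     (if s \<le> \<sigma> then exp (c1 * (LINT \<nu>:{s..\<sigma>}|lborel. lam \<nu>))
      else exp (M * (\<sigma> - s)))"

definition SigmaM :: "real \<Rightarrow> real \<Rightarrow> (real \<Rightarrow> real) \<Rightarrow> real \<Rightarrow> real \<Rightarrow> real" where
  "SigmaM c1 M lam s \<sigma> =
     (if s \<le> \<sigma> then exp (- (c1 * (LINT \<nu>:{s..\<sigma>}|lborel. lam \<nu>)))
      else exp (- (M * (\<sigma> - s))))"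

end

theory Submission
  imports Defs "HOL-Real_Asymp.Real_Asymp"
begin

text \<open>
  Both weights are exponentials of a potential \<open>\<Phi>\<close>: \<open>\<Sigma>^+(s, \<sigma>) = e^{\<Phi>(\<sigma>)}\<close>
  and \<open>\<Sigma>^-(\<sigma>, s) = e^{\<Phi>(\<sigma>)}\<close>, where in both cases \<open>\<Phi>\<close> is admissible: its increments over
  \<open>[x, y]\<close> lie between \<open>c1 \<integral>_x^y lam\<close> and \<open>M (y - x)\<close>.  The whole estimate is proved for an
  arbitrary admissible potential.

  The heart of the argument is the one-dimensional bound
  \<open>\<integral>_{-\<infinity>}^y lam(\<sigma>) e^{\<Phi>(\<sigma>)} d\<sigma> \<le> e^{\<Phi>(y)} / c1\<close>, which follows from
  \<open>\<integral>_{-\<infinity>}^y lam(\<sigma>) exp(-a \<integral>_\<sigma>^y lam) d\<sigma> \<le> 1/a\<close>; the latter is proved by a layer-cake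
  argument (Tonelli plus a sublevel-set estimate), so no differentiability of \<open>lam\<close> is needed.
  Everything else is elementary: on the side where the kernel decays like \<open>e^{-N |\<cdot>|}\<close> the
  weight grows at most like \<open>e^{M |\<cdot>|}\<close> with \<open>M < N\<close>, giving exponential integrals; on the other
  side the monotonicity of \<open>\<Phi>\<close> or the one-dimensional bound applies.
\<close>

section \<open>Exponential integrals on half-lines\<close>

lemma nn_integral_exp_decay:
  fixes r x0 :: real
  assumes "r > 0"
  shows "(\<integral>\<^sup>+x. ennreal (exp (- r * (x - x0))) * indicator {x0..} x \<partial>lborel) = ennreal (1 / r)"
proof -
  have "(\<integral>\<^sup>+x. ennreal (exp (- r * (x - x0))) * indicator {x0..} x \<partial>lborel)
      = 0 - (- exp (- r * (x0 - x0)) / r)"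
  proof (rule nn_integral_FTC_atLeast[where F = "\<lambda>x. - exp (- r * (x - x0)) / r"])
    show "((\<lambda>x. - exp (- r * (x - x0)) / r) \<longlongrightarrow> 0) at_top"
      using assms by real_asymp
    show "((\<lambda>x. - exp (- r * (x - x0)) / r) has_real_derivative exp (- r * (x - x0))) (at x)" for x
      using assms by (auto intro!: derivative_eq_intros simp: field_simps)
  qed auto
  then show ?thesis by simp
qed

lemma nn_integral_exp_growth:
  fixes r x0 :: real
  assumes "r > 0"
  shows "(\<integral>\<^sup>+x. ennreal (exp (r * (x - x0))) * indicator {..x0} x \<partial>lborel) = ennreal (1 / r)"
proof -
  have "(\<integral>\<^sup>+x. ennreal (exp (r * (x - x0))) * indicator {..x0} x \<partial>lborel)
      = (\<integral>\<^sup>+x. ennreal (exp (- r * (x - x0))) * indicator {x0..} x \<partial>lborel)"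
    by (subst nn_integral_real_affine[where c = "-1" and t = "2 * x0"])
       (auto intro!: nn_integral_cong simp: indicator_def algebra_simps)
  with nn_integral_exp_decay[OF assms] show ?thesis by simp
qed

lemma nn_integral_exp_density_tail:
  fixes a w :: real
  assumes "a > 0"
  shows "(\<integral>\<^sup>+u. ennreal (a * exp (- a * u)) * indicator {w..} u \<partial>lborel) = ennreal (exp (- a * w))"
proof -
  have "(\<integral>\<^sup>+u. ennreal (a * exp (- a * u)) * indicator {w..} u \<partial>lborel) = 0 - (- exp (- a * w))"
  proof (rule nn_integral_FTC_atLeast[where F = "\<lambda>u. - exp (- a * u)"])
    show "((\<lambda>u. - exp (- a * u)) \<longlongrightarrow> 0) at_top"
      using assms by real_asymp
    show "((\<lambda>u. - exp (- a * u)) has_real_derivative a * exp (- a * x)) (at x)" for x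
      using assms by (auto intro!: derivative_eq_intros simp: field_simps)
  qed (use assms in auto)
  then show ?thesis by simp
qed

lemma nn_integral_exp_density_mean:
  fixes a :: real
  assumes "a > 0"
  shows "(\<integral>\<^sup>+u. ennreal (a * u * exp (- a * u)) * indicator {0..} u \<partial>lborel) = ennreal (1 / a)"
proof -
  have "(\<integral>\<^sup>+u. ennreal (a * u * exp (- a * u)) * indicator {0..} u \<partial>lborel)
      = 0 - (- (0 + 1 / a) * exp (- a * 0))"
  proof (rule nn_integral_FTC_atLeast[where F = "\<lambda>u. - (u + 1 / a) * exp (- a * u)"])
    show "((\<lambda>u. - (u + 1 / a) * exp (- a * u)) \<longlongrightarrow> 0) at_top"
      using assms by real_asymp
    show "((\<lambda>u. - (u + 1 / a) * exp (- a * u)) has_real_derivative a * x * exp (- a * x)) (at x)" for x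
      using assms by (auto intro!: derivative_eq_intros simp: field_simps)
  qed (use assms in auto)
  then show ?thesis by simp
qed

section \<open>Weighted exponential estimates for a nonnegative weight\<close>

context
  fixes lam :: "real \<Rightarrow> real"
  assumes lam_nonneg: "\<And>x. 0 \<le> lam x"
    and lam_meas [measurable]: "lam \<in> borel_measurable borel"
    and lam_int: "\<And>x y. lam integrable_on {x..y}"
begin

lemma nn_integral_weight_interval:
  "(\<integral>\<^sup>+\<sigma>. ennreal (lam \<sigma>) * indicator {m..y} \<sigma> \<partial>lborel) = ennreal (integral {m..y} lam)"
proof -
  have "(\<integral>\<^sup>+\<sigma>. ennreal (lam \<sigma>) * indicator {m..y} \<sigma> \<partial>lborel)
      = (\<integral>\<^sup>+\<sigma>. ennreal (indicator {m..y} \<sigma> * lam \<sigma>) \<partial>lborel)"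
    by (intro nn_integral_cong) (auto simp: indicator_def)
  also have "\<dots> = ennreal (integral {m..y} lam)"
  proof (rule nn_integral_has_integral_lborel)
    show "0 \<le> indicator {m..y} x * lam x" for x
      using lam_nonneg by (auto simp: indicator_def)
    have "(lam has_integral integral {m..y} lam) {m..y}"
      using lam_int by (rule integrable_integral)
    then have "((\<lambda>x. if x \<in> {m..y} then lam x else 0) has_integral integral {m..y} lam) UNIV"
      by (subst has_integral_restrict_UNIV)
    then show "((\<lambda>\<sigma>. indicator {m..y} \<sigma> * lam \<sigma>) has_integral integral {m..y} lam) UNIV"
      by (rule has_integral_eq[rotated]) (auto simp: indicator_def)
  qed measurable
  finally show ?thesis .
qed

lemma tail_integral_nonneg: "0 \<le> integral {\<sigma>..y} lam"
  using lam_int lam_nonneg by (intro integral_nonneg) auto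

lemma tail_integral_antimono:
  assumes "\<sigma>1 \<le> \<sigma>2"
  shows "integral {\<sigma>2..y} lam \<le> integral {\<sigma>1..y} lam"
proof (cases "\<sigma>2 \<le> y")
  case True
  then have "integral {\<sigma>1..\<sigma>2} lam + integral {\<sigma>2..y} lam = integral {\<sigma>1..y} lam"
    using assms lam_int by (intro Henstock_Kurzweil_Integration.integral_combine) auto
  with tail_integral_nonneg[of \<sigma>1 \<sigma>2] show ?thesis by linarith
next
  case False
  then show ?thesis using tail_integral_nonneg[of \<sigma>1 y] by simp
qed

lemma tail_integral_measurable [measurable]:
  "(\<lambda>\<sigma>. integral {\<sigma>..y} lam) \<in> borel_measurable borel"
proof -
  have "mono (\<lambda>\<sigma>. - integral {\<sigma>..y} lam)"
    by (auto simp: mono_def intro: tail_integral_antimono)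
  then have "(\<lambda>\<sigma>. - (- integral {\<sigma>..y} lam)) \<in> borel_measurable borel"
    using borel_measurable_mono borel_measurable_uminus by blast
  then show ?thesis by simp
qed

text \<open>Since the tail integral is
  continuous and nonincreasing, this set is an interval \<open>[m, y]\<close> with \<open>integral {m..y} lam \<le> u\<close>.\<close>

lemma weight_of_sublevel_set_compact:
  "(\<integral>\<^sup>+\<sigma>. ennreal (lam \<sigma>) * indicator ({b..y} \<inter> {\<sigma>. integral {\<sigma>..y} lam \<le> u}) \<sigma> \<partial>lborel)
     \<le> ennreal u"
proof -
  define S where "S = {b..y} \<inter> {\<sigma>. integral {\<sigma>..y} lam \<le> u}"
  show ?thesis
  proof (cases "S = {}")
    case True
    then show ?thesis by (simp flip: S_def)
  next
    case False
    have "continuous_on {b..y} (\<lambda>\<sigma>. integral {\<sigma>..y} lam)"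
      using lam_int by (rule indefinite_integral_continuous_1')
    moreover have "S = {b..y} \<inter> (\<lambda>\<sigma>. integral {\<sigma>..y} lam) -` {..u}"
      by (auto simp: S_def)
    ultimately have "closed S"
      by (metis closed_atLeastAtMost closed_atMost continuous_closed_preimage)
    moreover have bdd: "bdd_below S"
      unfolding S_def by (auto intro: bdd_belowI[where m = b])
    ultimately have m_in: "Inf S \<in> S"
      using False by (intro closed_contains_Inf)
    have "S \<subseteq> {Inf S..y}"
    proof
      fix \<sigma> assume "\<sigma> \<in> S"
      then show "\<sigma> \<in> {Inf S..y}"
        using cInf_lower[OF \<open>\<sigma> \<in> S\<close> bdd] by (simp add: S_def)
    qed
    then have "(\<integral>\<^sup>+\<sigma>. ennreal (lam \<sigma>) * indicator S \<sigma> \<partial>lborel)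
        \<le> (\<integral>\<^sup>+\<sigma>. ennreal (lam \<sigma>) * indicator {Inf S..y} \<sigma> \<partial>lborel)"
      by (intro nn_integral_mono) (auto simp: indicator_def)
    also have "\<dots> = ennreal (integral {Inf S..y} lam)"
      by (rule nn_integral_weight_interval)
    also have "\<dots> \<le> ennreal u"
      using m_in by (auto simp: S_def intro: ennreal_leI)
    finally show ?thesis unfolding S_def .
  qed
qed

text \<open>The same estimate on the half-line \<open>(-\<infinity>, y]\<close>, by monotone convergence over the
  truncations \<open>[y - n, y]\<close>.\<close>

lemma weight_of_sublevel_set:
  "(\<integral>\<^sup>+\<sigma>. ennreal (lam \<sigma>) * indicator {\<sigma>. \<sigma> \<le> y \<and> integral {\<sigma>..y} lam \<le> u} \<sigma> \<partial>lborel)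
     \<le> ennreal u"
proof -
  define f where "f = (\<lambda>(n::nat) \<sigma>.
    ennreal (lam \<sigma>) * indicator ({y - real n..y} \<inter> {\<sigma>. integral {\<sigma>..y} lam \<le> u}) \<sigma>)"
  have f_meas: "f n \<in> borel_measurable lborel" for n
    unfolding f_def by measurable
  have "incseq f"
    by (auto simp: incseq_def le_fun_def f_def indicator_def intro!: mult_left_mono)
  have sup: "(SUP n. f n \<sigma>) = ennreal (lam \<sigma>) * indicator {\<sigma>. \<sigma> \<le> y \<and> integral {\<sigma>..y} lam \<le> u} \<sigma>"
    for \<sigma>
  proof (rule antisym)
    show "(SUP n. f n \<sigma>) \<le> ennreal (lam \<sigma>) * indicator {\<sigma>. \<sigma> \<le> y \<and> integral {\<sigma>..y} lam \<le> u} \<sigma>"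
      by (rule SUP_least) (auto simp: f_def indicator_def)
    obtain n :: nat where "y - \<sigma> \<le> real n" using real_arch_simple by blast
    then have "f n \<sigma> = ennreal (lam \<sigma>) * indicator {\<sigma>. \<sigma> \<le> y \<and> integral {\<sigma>..y} lam \<le> u} \<sigma>"
      by (auto simp: f_def indicator_def)
    then show "ennreal (lam \<sigma>) * indicator {\<sigma>. \<sigma> \<le> y \<and> integral {\<sigma>..y} lam \<le> u} \<sigma> \<le> (SUP n. f n \<sigma>)"
      by (metis SUP_upper UNIV_I)
  qed
  have "(\<integral>\<^sup>+\<sigma>. ennreal (lam \<sigma>) * indicator {\<sigma>. \<sigma> \<le> y \<and> integral {\<sigma>..y} lam \<le> u} \<sigma> \<partial>lborel)
      = (SUP n. \<integral>\<^sup>+\<sigma>. f n \<sigma> \<partial>lborel)"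
    using nn_integral_monotone_convergence_SUP[OF \<open>incseq f\<close> f_meas] by (simp add: sup)
  also have "\<dots> \<le> ennreal u"
    unfolding f_def by (intro SUP_least weight_of_sublevel_set_compact)
  finally show ?thesis .
qed

text \<open>Writing \<open>exp(-a g)\<close> as the tail \<open>\<integral>_g^\<infinity> a e^{-a u} du\<close> and exchanging the order of
  integration (Tonelli), the inner integral is the sublevel-set mass, which is at most \<open>u\<close>;
  what remains is the mean \<open>\<integral>_0^\<infinity> a u e^{-a u} du = 1/a\<close>.\<close>

lemma weighted_exp_tail_integral:
  assumes a: "a > 0"
  shows "(\<integral>\<^sup>+\<sigma>. ennreal (lam \<sigma> * exp (- a * integral {\<sigma>..y} lam)) * indicator {..y} \<sigma> \<partial>lborel)
     \<le> ennreal (1 / a)"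
proof -
  define g where "g = (\<lambda>\<sigma>. integral {\<sigma>..y} lam)"
  have g_meas [measurable]: "g \<in> borel_measurable borel"
    unfolding g_def by measurable
  define h where "h = (\<lambda>\<sigma> u. ennreal (lam \<sigma>) * indicator {..y} \<sigma>
                                 * (ennreal (a * exp (- a * u)) * indicator {g \<sigma>..} u))"
  have h_meas: "(\<lambda>(u, \<sigma>). h \<sigma> u) \<in> borel_measurable (lborel \<Otimes>\<^sub>M lborel)"
    unfolding h_def indicator_def atLeast_iff atMost_iff by measurable
  have integrand_as_tail: "ennreal (lam \<sigma> * exp (- a * g \<sigma>)) * indicator {..y} \<sigma>
      = (\<integral>\<^sup>+u. h \<sigma> u \<partial>lborel)" for \<sigma>
  proof -
    have "(\<integral>\<^sup>+u. h \<sigma> u \<partial>lborel) = ennreal (lam \<sigma>) * indicator {..y} \<sigma>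
        * (\<integral>\<^sup>+u. ennreal (a * exp (- a * u)) * indicator {g \<sigma>..} u \<partial>lborel)"
      unfolding h_def by (rule nn_integral_cmult) measurable
    also have "\<dots> = ennreal (lam \<sigma>) * indicator {..y} \<sigma> * ennreal (exp (- a * g \<sigma>))"
      using nn_integral_exp_density_tail[OF a] by simp
    finally show ?thesis
      using lam_nonneg by (simp add: ennreal_mult mult_ac)
  qed
  have inner: "(\<integral>\<^sup>+\<sigma>. h \<sigma> u \<partial>lborel) \<le> ennreal (a * u * exp (- a * u)) * indicator {0..} u" for u
  proof (cases "0 \<le> u")
    case True
    have "(\<integral>\<^sup>+\<sigma>. h \<sigma> u \<partial>lborel) = ennreal (a * exp (- a * u))
        * (\<integral>\<^sup>+\<sigma>. ennreal (lam \<sigma>) * indicator {\<sigma>. \<sigma> \<le> y \<and> g \<sigma> \<le> u} \<sigma> \<partial>lborel)"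
      by (subst nn_integral_cmult[symmetric])
         (unfold indicator_def atLeast_iff atMost_iff, measurable,
          auto intro!: nn_integral_cong simp: h_def mult_ac)
    also have "\<dots> \<le> ennreal (a * exp (- a * u)) * ennreal u"
      using weight_of_sublevel_set[of y u] by (intro mult_left_mono) (simp_all add: g_def)
    also have "\<dots> = ennreal (a * u * exp (- a * u)) * indicator {0..} u"
      using True a by (simp add: ennreal_mult[symmetric] mult_ac)
    finally show ?thesis .
  next
    case False
    then have "h \<sigma> u = 0" for \<sigma>
      using tail_integral_nonneg[of \<sigma> y] by (auto simp: h_def g_def indicator_def)
    then show ?thesis by simp
  qed
  have "(\<integral>\<^sup>+\<sigma>. ennreal (lam \<sigma> * exp (- a * g \<sigma>)) * indicator {..y} \<sigma> \<partial>lborel)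
      = (\<integral>\<^sup>+\<sigma>. \<integral>\<^sup>+u. h \<sigma> u \<partial>lborel \<partial>lborel)"
    using integrand_as_tail by simp
  also have "\<dots> = (\<integral>\<^sup>+u. \<integral>\<^sup>+\<sigma>. h \<sigma> u \<partial>lborel \<partial>lborel)"
    using lborel_pair.Fubini'[OF h_meas] by simp
  also have "\<dots> \<le> (\<integral>\<^sup>+u. ennreal (a * u * exp (- a * u)) * indicator {0..} u \<partial>lborel)"
    by (intro nn_integral_mono inner)
  also have "\<dots> = ennreal (1 / a)"
    by (rule nn_integral_exp_density_mean[OF a])
  finally show ?thesis unfolding g_def .
qed

text \<open>Consequence for any potential \<open>\<Phi>\<close> that increases at least at rate \<open>a lam\<close>:
  \<open>\<integral>_{-\<infinity>}^y lam(\<sigma>) e^{\<Phi>(\<sigma>)} d\<sigma> \<le> e^{\<Phi>(y)} / a\<close>, because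
  \<open>\<Phi>(\<sigma>) \<le> \<Phi>(y) - a \<integral>_\<sigma>^y lam\<close> for \<open>\<sigma> \<le> y\<close>.\<close>

lemma weighted_exp_potential_integral:
  fixes \<Phi> :: "real \<Rightarrow> real"
  assumes a: "a > 0"
    and growth: "\<And>x y. x \<le> y \<Longrightarrow> a * integral {x..y} lam \<le> \<Phi> y - \<Phi> x"
  shows "(\<integral>\<^sup>+\<sigma>. ennreal (lam \<sigma> * exp (\<Phi> \<sigma>)) * indicator {..y} \<sigma> \<partial>lborel) \<le> ennreal (exp (\<Phi> y) / a)"
proof -
  have pointwise: "ennreal (lam \<sigma> * exp (\<Phi> \<sigma>)) * indicator {..y} \<sigma>
      \<le> ennreal (exp (\<Phi> y)) * (ennreal (lam \<sigma> * exp (- a * integral {\<sigma>..y} lam)) * indicator {..y} \<sigma>)"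
    for \<sigma>
  proof (cases "\<sigma> \<le> y")
    case True
    have "exp (\<Phi> \<sigma>) \<le> exp (\<Phi> y) * exp (- a * integral {\<sigma>..y} lam)"
      using growth[OF True] by (simp flip: exp_add)
    then have "lam \<sigma> * exp (\<Phi> \<sigma>) \<le> exp (\<Phi> y) * (lam \<sigma> * exp (- a * integral {\<sigma>..y} lam))"
      using lam_nonneg[of \<sigma>] by (metis mult.left_commute mult_left_mono)
    then show ?thesis
      using True lam_nonneg[of \<sigma>] by (simp add: ennreal_mult[symmetric] ennreal_leI)
  qed simp
  have "(\<integral>\<^sup>+\<sigma>. ennreal (lam \<sigma> * exp (\<Phi> \<sigma>)) * indicator {..y} \<sigma> \<partial>lborel)
      \<le> (\<integral>\<^sup>+\<sigma>. ennreal (exp (\<Phi> y))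
           * (ennreal (lam \<sigma> * exp (- a * integral {\<sigma>..y} lam)) * indicator {..y} \<sigma>) \<partial>lborel)"
    by (intro nn_integral_mono pointwise)
  also have "\<dots> = ennreal (exp (\<Phi> y))
      * (\<integral>\<^sup>+\<sigma>. ennreal (lam \<sigma> * exp (- a * integral {\<sigma>..y} lam)) * indicator {..y} \<sigma> \<partial>lborel)"
    by (rule nn_integral_cmult) measurable
  also have "\<dots> \<le> ennreal (exp (\<Phi> y)) * ennreal (1 / a)"
    by (intro mult_left_mono weighted_exp_tail_integral a) simp
  also have "\<dots> = ennreal (exp (\<Phi> y) / a)"
    using a by (simp add: ennreal_mult[symmetric])
  finally show ?thesis .
qed

end


section \<open>Admissible potentials\<close>

definition admissible_potential ::
    "real set \<Rightarrow> real \<Rightarrow> real \<Rightarrow> (real \<Rightarrow> real) \<Rightarrow> (real \<Rightarrow> real) \<Rightarrow> bool" where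
  "admissible_potential S a M lam \<Phi> \<longleftrightarrow>
     (\<forall>x\<in>S. \<forall>y\<in>S. x \<le> y \<longrightarrow> a * integral {x..y} lam \<le> \<Phi> y - \<Phi> x \<and> \<Phi> y - \<Phi> x \<le> M * (y - x))"

context
  fixes lam :: "real \<Rightarrow> real" and a M :: real
  assumes lam_int: "\<And>x y. lam integrable_on {x..y}"
begin

lemma integral_combine_weight:
  "x \<le> y \<Longrightarrow> y \<le> z \<Longrightarrow> integral {x..z} lam = integral {x..y} lam + integral {y..z} lam"
  using lam_int by (metis Henstock_Kurzweil_Integration.integral_combine)

lemma weight_integral_le_rate:
  assumes rate: "\<And>x. a * lam x \<le> M" and "x \<le> y"
  shows "a * integral {x..y} lam \<le> M * (y - x)"
proof -
  have "a * integral {x..y} lam = integral {x..y} (\<lambda>\<nu>. a * lam \<nu>)"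
    by simp
  also have "\<dots> \<le> integral {x..y} (\<lambda>_. M)"
    using integrable_on_cmult_left[OF lam_int, of a] rate by (intro integral_le) auto
  also have "\<dots> = M * (y - x)"
    using \<open>x \<le> y\<close> by simp
  finally show ?thesis .
qed

lemma admissible_linear:
  assumes "\<And>x. a * lam x \<le> M"
  shows "admissible_potential S a M lam (\<lambda>\<sigma>. M * (\<sigma> - s))"
  using weight_integral_le_rate[OF assms]
  by (simp add: admissible_potential_def algebra_simps)

lemma admissible_integral_from:
  assumes "\<And>x. a * lam x \<le> M"
  shows "admissible_potential {s..} a M lam (\<lambda>\<sigma>. a * integral {s..\<sigma>} lam)"
  unfolding admissible_potential_def
proof (intro ballI impI)
  fix x y assume "x \<in> {s..}" "y \<in> {s..}" "x \<le> y"
  then have "a * integral {s..y} lam - a * integral {s..x} lam = a * integral {x..y} lam"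
    using integral_combine_weight[of s x y] by (simp add: algebra_simps)
  then show "a * integral {x..y} lam \<le> a * integral {s..y} lam - a * integral {s..x} lam
      \<and> a * integral {s..y} lam - a * integral {s..x} lam \<le> M * (y - x)"
    using weight_integral_le_rate[OF assms \<open>x \<le> y\<close>] by simp
qed

lemma admissible_integral_to:
  assumes "\<And>x. a * lam x \<le> M"
  shows "admissible_potential {..s} a M lam (\<lambda>\<sigma>. - (a * integral {\<sigma>..s} lam))"
  unfolding admissible_potential_def
proof (intro ballI impI)
  fix x y assume "x \<in> {..s}" "y \<in> {..s}" "x \<le> y"
  then have "- (a * integral {y..s} lam) - - (a * integral {x..s} lam) = a * integral {x..y} lam"
    using integral_combine_weight[of x y s] by (simp add: algebra_simps)
  then show "a * integral {x..y} lam \<le> - (a * integral {y..s} lam) - - (a * integral {x..s} lam)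
      \<and> - (a * integral {y..s} lam) - - (a * integral {x..s} lam) \<le> M * (y - x)"
    using weight_integral_le_rate[OF assms \<open>x \<le> y\<close>] by simp
qed

lemma admissible_glue:
  assumes A: "admissible_potential {..s} a M lam A"
    and B: "admissible_potential {s..} a M lam B"
    and AB: "A s = B s"
  shows "admissible_potential UNIV a M lam (\<lambda>\<sigma>. if \<sigma> \<le> s then A \<sigma> else B \<sigma>)"
  unfolding admissible_potential_def
proof (intro ballI impI)
  fix x y :: real assume "x \<le> y"
  consider "y \<le> s" | "s < x" | "x \<le> s" "s < y" by linarith
  then show "a * integral {x..y} lam \<le> (if y \<le> s then A y else B y) - (if x \<le> s then A x else B x)
    \<and> (if y \<le> s then A y else B y) - (if x \<le> s then A x else B x) \<le> M * (y - x)"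
  proof cases
    case 1 then show ?thesis using A \<open>x \<le> y\<close> by (auto simp: admissible_potential_def)
  next
    case 2 then show ?thesis using B \<open>x \<le> y\<close> by (auto simp: admissible_potential_def)
  next
    case 3
    then have "a * integral {x..s} lam \<le> A s - A x \<and> A s - A x \<le> M * (s - x)"
      and "a * integral {s..y} lam \<le> B y - B s \<and> B y - B s \<le> M * (y - s)"
      using A B by (auto simp: admissible_potential_def)
    moreover have "integral {x..y} lam = integral {x..s} lam + integral {s..y} lam"
      using 3 by (intro integral_combine_weight) auto
    ultimately show ?thesis
      using 3 AB by (simp add: algebra_simps)
  qed
qed

end

section \<open>The kernel integrated against the exponential of an admissible potential\<close>

text \<open>From now on \<open>lam\<close> is also bounded by \<open>L\<close>, and \<open>\<Phi>\<close> is admissible on the whole line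
  with an upper rate \<open>M\<close> strictly below \<open>N\<close>; the gap \<open>N - M\<close> makes the kernel integrable
  in \<open>\<sigma>\<close> to the right of \<open>\<tau>\<close> and in \<open>\<tau>\<close> to the right of \<open>t\<close>.\<close>

context
  fixes lam :: "real \<Rightarrow> real" and L a M :: real and N :: nat and \<Phi> :: "real \<Rightarrow> real"
  assumes lam_nonneg: "\<And>x. 0 \<le> lam x"
    and lam_meas [measurable]: "lam \<in> borel_measurable borel"
    and lam_int: "\<And>x y. lam integrable_on {x..y}"
    and lam_le: "\<And>x. lam x \<le> L"
    and a_pos: "a > 0"
    and gap: "M < real N"
    and admissible: "admissible_potential UNIV a M lam \<Phi>"
begin

lemma potential_growth: "x \<le> y \<Longrightarrow> a * integral {x..y} lam \<le> \<Phi> y - \<Phi> x"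
  and potential_upper: "x \<le> y \<Longrightarrow> \<Phi> y - \<Phi> x \<le> M * (y - x)"
  using admissible by (auto simp: admissible_potential_def)

lemma potential_mono: "mono \<Phi>"
proof (rule monoI)
  fix x y :: real assume "x \<le> y"
  have "0 \<le> a * integral {x..y} lam"
    using a_pos tail_integral_nonneg[OF lam_nonneg lam_meas lam_int] by simp
  with potential_growth[OF \<open>x \<le> y\<close>] show "\<Phi> x \<le> \<Phi> y" by linarith
qed

lemma potential_measurable [measurable]: "\<Phi> \<in> borel_measurable borel"
  using potential_mono by (rule borel_measurable_mono)

text \<open>Pointwise bound for the kernel \<open>E(\<tau>, \<sigma>)\<close> weighted by \<open>e^{\<Phi>(\<sigma>)}\<close>: to the right of
  \<open>\<tau>\<close> the factor \<open>e^{N(\<tau>-\<sigma>)}\<close> beats the growth \<open>e^{M(\<sigma>-\<tau>)}\<close> of the weight; to the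
  left of \<open>\<tau>\<close> the weight is at most \<open>e^{\<Phi>(\<tau>)}\<close> except in the term \<open>lam(\<tau>) lam(\<sigma>)\<close>,
  which is kept for the estimate of the previous section.\<close>

lemma kernel_pointwise_bound:
  "Ekern N lam \<tau> \<sigma> * exp (\<Phi> \<sigma>)
     \<le> (lam \<tau>)\<^sup>2 * exp (\<Phi> \<tau>)
         * (exp (- (real N - M) * (\<sigma> - \<tau>)) * indicator {\<tau>..} \<sigma> + exp (\<sigma> - \<tau>) * indicator {..\<tau>} \<sigma>)
       + lam \<tau> * (lam \<sigma> * exp (\<Phi> \<sigma>) * indicator {..\<tau>} \<sigma>)"
proof (cases "\<tau> \<le> \<sigma>")
  case True
  have "exp (real N * (\<tau> - \<sigma>)) * exp (\<Phi> \<sigma>) \<le> exp (real N * (\<tau> - \<sigma>)) * exp (\<Phi> \<tau> + M * (\<sigma> - \<tau>))"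
    using potential_upper[OF True] by simp
  also have "\<dots> = exp (\<Phi> \<tau>) * exp (- (real N - M) * (\<sigma> - \<tau>))"
    by (simp add: algebra_simps flip: exp_add)
  finally have "(lam \<tau>)\<^sup>2 * (exp (real N * (\<tau> - \<sigma>)) * exp (\<Phi> \<sigma>))
      \<le> (lam \<tau>)\<^sup>2 * (exp (\<Phi> \<tau>) * exp (- (real N - M) * (\<sigma> - \<tau>)))"
    by (intro mult_left_mono) auto
  then show ?thesis
    using True lam_nonneg[of \<tau>] lam_nonneg[of \<sigma>]
    by (auto simp: Ekern_def indicator_def mult_ac)
next
  case False
  have "exp (\<Phi> \<sigma>) \<le> exp (\<Phi> \<tau>)"
    using False potential_mono by (simp add: monoD)
  then have "lam \<tau> * (lam \<tau> * exp (\<sigma> - \<tau>) * exp (\<Phi> \<sigma>)) \<le> lam \<tau> * (lam \<tau> * exp (\<sigma> - \<tau>) * exp (\<Phi> \<tau>))"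
    using lam_nonneg[of \<tau>] by (intro mult_left_mono) auto
  then show ?thesis
    using False lam_nonneg[of \<tau>] lam_nonneg[of \<sigma>]
    by (auto simp: Ekern_def indicator_def algebra_simps power2_eq_square)
qed

lemma kernel_inner_integral:
  "(\<integral>\<^sup>+\<sigma>. ennreal (Ekern N lam \<tau> \<sigma> * exp (\<Phi> \<sigma>)) \<partial>lborel)
     \<le> ennreal (lam \<tau> * exp (\<Phi> \<tau>) * (L / (real N - M) + L + 1 / a))"
proof -
  define \<delta> where "\<delta> = real N - M"
  have \<delta>: "\<delta> > 0" using gap by (simp add: \<delta>_def)
  define k where "k = (lam \<tau>)\<^sup>2 * exp (\<Phi> \<tau>)"
  have k: "0 \<le> k" by (simp add: k_def)
  define R where "R = (\<lambda>\<sigma>. ennreal (exp (- \<delta> * (\<sigma> - \<tau>))) * indicator {\<tau>..} \<sigma>)"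
  define Lf where "Lf = (\<lambda>\<sigma>. ennreal (exp (1 * (\<sigma> - \<tau>))) * indicator {..\<tau>} \<sigma>)"
  define W where "W = (\<lambda>\<sigma>. ennreal (lam \<sigma> * exp (\<Phi> \<sigma>)) * indicator {..\<tau>} \<sigma>)"
  have [measurable]: "R \<in> borel_measurable lborel" "Lf \<in> borel_measurable lborel"
    "W \<in> borel_measurable lborel"
    by (simp_all add: R_def Lf_def W_def)
  have "(\<integral>\<^sup>+\<sigma>. ennreal (Ekern N lam \<tau> \<sigma> * exp (\<Phi> \<sigma>)) \<partial>lborel)
      \<le> (\<integral>\<^sup>+\<sigma>. ennreal k * (R \<sigma> + Lf \<sigma>) + ennreal (lam \<tau>) * W \<sigma> \<partial>lborel)"
  proof (intro nn_integral_mono)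
    fix \<sigma>
    have "ennreal (Ekern N lam \<tau> \<sigma> * exp (\<Phi> \<sigma>))
        \<le> ennreal (k * (exp (- \<delta> * (\<sigma> - \<tau>)) * indicator {\<tau>..} \<sigma> + exp (\<sigma> - \<tau>) * indicator {..\<tau>} \<sigma>)
                  + lam \<tau> * (lam \<sigma> * exp (\<Phi> \<sigma>) * indicator {..\<tau>} \<sigma>))"
      using kernel_pointwise_bound by (intro ennreal_leI) (simp add: k_def \<delta>_def)
    also have "\<dots> = ennreal k * (R \<sigma> + Lf \<sigma>) + ennreal (lam \<tau>) * W \<sigma>"
      using k lam_nonneg[of \<tau>] lam_nonneg[of \<sigma>]
      by (simp add: R_def Lf_def W_def ennreal_mult ennreal_plus indicator_def)
    finally show "ennreal (Ekern N lam \<tau> \<sigma> * exp (\<Phi> \<sigma>)) \<le> ennreal k * (R \<sigma> + Lf \<sigma>) + ennreal (lam \<tau>) * W \<sigma>" .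
  qed
  also have "\<dots> = ennreal k * ((\<integral>\<^sup>+\<sigma>. R \<sigma> \<partial>lborel) + (\<integral>\<^sup>+\<sigma>. Lf \<sigma> \<partial>lborel))
      + ennreal (lam \<tau>) * (\<integral>\<^sup>+\<sigma>. W \<sigma> \<partial>lborel)"
    by (simp add: nn_integral_add nn_integral_cmult)
  also have "\<dots> \<le> ennreal k * (ennreal (1 / \<delta>) + ennreal (1 / 1)) + ennreal (lam \<tau>) * ennreal (exp (\<Phi> \<tau>) / a)"
    unfolding R_def Lf_def nn_integral_exp_decay[OF \<delta>] nn_integral_exp_growth[OF zero_less_one] W_def
    by (intro add_mono order_refl mult_left_mono
          weighted_exp_potential_integral[OF lam_nonneg lam_meas lam_int a_pos potential_growth]) simp_all
  also have "\<dots> = ennreal (k * (1 / \<delta> + 1) + lam \<tau> * (exp (\<Phi> \<tau>) / a))"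
  proof -
    have "ennreal k * (ennreal (1 / \<delta>) + ennreal (1 / 1)) = ennreal (k * (1 / \<delta> + 1))"
      using k \<delta> by (simp add: ennreal_mult ennreal_plus)
    moreover have "ennreal (lam \<tau>) * ennreal (exp (\<Phi> \<tau>) / a) = ennreal (lam \<tau> * (exp (\<Phi> \<tau>) / a))"
      using lam_nonneg[of \<tau>] a_pos by (simp add: ennreal_mult[symmetric])
    ultimately show ?thesis
      using k \<delta> a_pos lam_nonneg[of \<tau>] by (simp add: ennreal_plus)
  qed
  also have "\<dots> \<le> ennreal (lam \<tau> * exp (\<Phi> \<tau>) * (L / (real N - M) + L + 1 / a))"
  proof (rule ennreal_leI)
    have "k * (1 / \<delta> + 1) = lam \<tau> * exp (\<Phi> \<tau>) * (lam \<tau> * (1 / \<delta> + 1))"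
      by (simp add: k_def power2_eq_square)
    also have "\<dots> \<le> lam \<tau> * exp (\<Phi> \<tau>) * (L * (1 / \<delta> + 1))"
      using lam_le[of \<tau>] lam_nonneg[of \<tau>] \<delta> by (intro mult_left_mono mult_right_mono) auto
    finally show "k * (1 / \<delta> + 1) + lam \<tau> * (exp (\<Phi> \<tau>) / a)
        \<le> lam \<tau> * exp (\<Phi> \<tau>) * (L / (real N - M) + L + 1 / a)"
      by (simp add: \<delta>_def algebra_simps)
  qed
  finally show ?thesis .
qed

text \<open>Pointwise bound for the time weight \<open>Q^{N,0}(e^{t-\<tau>})\<close>: it equals \<open>1\<close> for \<open>\<tau> \<le> t\<close>,
  and for \<open>\<tau> > t\<close> it is \<open>e^{N(t-\<tau>)}\<close>, which again beats the growth of the weight.\<close>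

lemma time_weight_pointwise_bound:
  "Qmn N 0 (exp (t - \<tau>)) * (lam \<tau> * exp (\<Phi> \<tau>))
     \<le> lam \<tau> * exp (\<Phi> \<tau>) * indicator {..t} \<tau>
       + L * exp (\<Phi> t) * (exp (- (real N - M) * (\<tau> - t)) * indicator {t..} \<tau>)"
proof (cases "\<tau> \<le> t")
  case True
  then show ?thesis
    using lam_le[of \<tau>] lam_nonneg[of \<tau>] by (simp add: Qmn_def indicator_def)
next
  case False
  have "exp (\<Phi> \<tau>) \<le> exp (\<Phi> t + M * (\<tau> - t))"
    using potential_upper[of t \<tau>] False by simp
  then have "lam \<tau> * exp (\<Phi> \<tau>) \<le> L * exp (\<Phi> t + M * (\<tau> - t))"
    using lam_le[of \<tau>] lam_nonneg[of \<tau>] by (intro mult_mono) auto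
  then have "exp (real N * (t - \<tau>)) * (lam \<tau> * exp (\<Phi> \<tau>))
      \<le> exp (real N * (t - \<tau>)) * (L * exp (\<Phi> t + M * (\<tau> - t)))"
    by (intro mult_left_mono) auto
  also have "\<dots> = L * exp (\<Phi> t) * exp (- (real N - M) * (\<tau> - t))"
    by (simp add: algebra_simps flip: exp_add)
  finally show ?thesis
    using False by (simp add: Qmn_def indicator_def exp_of_nat_mult)
qed

lemma kernel_double_integral:
  "(\<integral>\<^sup>+\<tau>. (\<integral>\<^sup>+\<sigma>. ennreal (Ekern3 N lam t \<tau> \<sigma> * exp (\<Phi> \<sigma>)) \<partial>lborel) \<partial>lborel)
     \<le> ennreal ((L / (real N - M) + L + 1 / a) * (1 / a + L / (real N - M)) * exp (\<Phi> t))"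
proof -
  define \<delta> where "\<delta> = real N - M"
  have \<delta>: "\<delta> > 0" using gap by (simp add: \<delta>_def)
  have L: "0 \<le> L" using lam_nonneg[of 0] lam_le[of 0] by linarith
  define K where "K = L / \<delta> + L + 1 / a"
  have K: "0 \<le> K" using L \<delta> a_pos by (simp add: K_def)
  define W where "W = (\<lambda>\<tau>. ennreal (lam \<tau> * exp (\<Phi> \<tau>)) * indicator {..t} \<tau>)"
  define R where "R = (\<lambda>\<tau>. ennreal (exp (- \<delta> * (\<tau> - t))) * indicator {t..} \<tau>)"
  have [measurable]: "W \<in> borel_measurable lborel" "R \<in> borel_measurable lborel"
    by (simp_all add: W_def R_def)
  have inner: "(\<integral>\<^sup>+\<sigma>. ennreal (Ekern3 N lam t \<tau> \<sigma> * exp (\<Phi> \<sigma>)) \<partial>lborel)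
      \<le> ennreal K * (W \<tau> + ennreal (L * exp (\<Phi> t)) * R \<tau>)" for \<tau>
  proof -
    define Q where "Q = Qmn N 0 (exp (t - \<tau>))"
    have Q: "0 \<le> Q" by (simp add: Q_def Qmn_def)
    have "(\<integral>\<^sup>+\<sigma>. ennreal (Ekern3 N lam t \<tau> \<sigma> * exp (\<Phi> \<sigma>)) \<partial>lborel)
        = (\<integral>\<^sup>+\<sigma>. ennreal Q * ennreal (Ekern N lam \<tau> \<sigma> * exp (\<Phi> \<sigma>)) \<partial>lborel)"
      using Q by (intro nn_integral_cong) (simp add: Ekern3_def Q_def ennreal_mult' mult.assoc)
    also have "\<dots> = ennreal Q * (\<integral>\<^sup>+\<sigma>. ennreal (Ekern N lam \<tau> \<sigma> * exp (\<Phi> \<sigma>)) \<partial>lborel)"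
      by (rule nn_integral_cmult) (simp add: Ekern_def)
    also have "\<dots> \<le> ennreal Q * ennreal (lam \<tau> * exp (\<Phi> \<tau>) * K)"
      by (intro mult_left_mono kernel_inner_integral[folded \<delta>_def, folded K_def]) simp
    also have "\<dots> = ennreal (K * (Q * (lam \<tau> * exp (\<Phi> \<tau>))))"
      using Q by (simp add: ennreal_mult'[symmetric] mult_ac)
    also have "\<dots> \<le> ennreal (K * (lam \<tau> * exp (\<Phi> \<tau>) * indicator {..t} \<tau>
        + L * exp (\<Phi> t) * (exp (- \<delta> * (\<tau> - t)) * indicator {t..} \<tau>)))"
      using time_weight_pointwise_bound[of t \<tau>] K
      by (intro ennreal_leI mult_left_mono) (simp_all add: Q_def \<delta>_def)
    also have "\<dots> = ennreal K * (W \<tau> + ennreal (L * exp (\<Phi> t)) * R \<tau>)"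
      using K L lam_nonneg[of \<tau>]
      by (simp add: W_def R_def ennreal_mult ennreal_plus indicator_def)
    finally show ?thesis .
  qed
  have "(\<integral>\<^sup>+\<tau>. (\<integral>\<^sup>+\<sigma>. ennreal (Ekern3 N lam t \<tau> \<sigma> * exp (\<Phi> \<sigma>)) \<partial>lborel) \<partial>lborel)
      \<le> (\<integral>\<^sup>+\<tau>. ennreal K * (W \<tau> + ennreal (L * exp (\<Phi> t)) * R \<tau>) \<partial>lborel)"
    by (intro nn_integral_mono inner)
  also have "\<dots> = ennreal K * ((\<integral>\<^sup>+\<tau>. W \<tau> \<partial>lborel) + ennreal (L * exp (\<Phi> t)) * (\<integral>\<^sup>+\<tau>. R \<tau> \<partial>lborel))"
    by (simp add: nn_integral_add nn_integral_cmult)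
  also have "\<dots> \<le> ennreal K * (ennreal (exp (\<Phi> t) / a) + ennreal (L * exp (\<Phi> t)) * ennreal (1 / \<delta>))"
    unfolding R_def nn_integral_exp_decay[OF \<delta>] W_def
    by (intro mult_left_mono add_mono order_refl
          weighted_exp_potential_integral[OF lam_nonneg lam_meas lam_int a_pos potential_growth]) simp_all
  also have "\<dots> = ennreal (K * (1 / a + L / \<delta>) * exp (\<Phi> t))"
    using K L \<delta> a_pos
    by (simp add: ennreal_mult[symmetric] ennreal_plus[symmetric] field_simps)
  finally show ?thesis by (simp add: K_def \<delta>_def)
qed

end

section \<open>The weights \<open>\<Sigma>^+\<close> and \<open>\<Sigma>^-\<close>\<close>

lemma antimono_integrable_on:
  fixes lam :: "real \<Rightarrow> real"
  assumes "antimono lam"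
  shows "lam integrable_on {x..y}"
proof -
  have "mono_on {x..y} (\<lambda>z. - lam z)"
    using assms by (auto simp: mono_on_def antimono_def)
  then have "(\<lambda>z. - (- lam z)) integrable_on {x..y}"
    by (intro integrable_neg integrable_on_mono_on)
  then show ?thesis by simp
qed

lemma set_lebesgue_integral_eq_integral:
  fixes lam :: "real \<Rightarrow> real"
  assumes "lam \<in> borel_measurable borel" and "\<And>x. 0 \<le> lam x \<and> lam x \<le> L"
  shows "(LINT \<nu>:{x..y}|lborel. lam \<nu>) = integral {x..y} lam"
proof -
  have "set_integrable lborel {x..y} lam"
    unfolding set_integrable_def
  proof (rule integrableI_bounded_set_indicator[where B = L])
    show "emeasure lborel {x..y} < \<infinity>" by (cases "x \<le> y") auto
  qed (use assms in \<open>auto intro!: AE_I2\<close>)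
  then show ?thesis by (rule set_borel_integral_eq_integral(2))
qed

context
  fixes lam :: "real \<Rightarrow> real" and L c1 M :: real
  assumes lam_meas: "lam \<in> borel_measurable borel"
    and lam_bounds: "\<And>x. 0 \<le> lam x \<and> lam x \<le> L"
    and lam_int: "\<And>x y. lam integrable_on {x..y}"
    and c1: "c1 \<ge> 0" and rates: "c1 * L \<le> M"
begin

lemma lower_rate_le_upper_rate: "c1 * lam x \<le> M"
  using lam_bounds[of x] c1 rates by (meson mult_left_mono order_trans)

lemma SigmaP_admissible:
  "\<exists>\<Phi>. admissible_potential UNIV c1 M lam \<Phi> \<and> (\<forall>\<sigma>. SigmaP c1 M lam s \<sigma> = exp (\<Phi> \<sigma>))"
proof (intro exI conjI allI)
  show "admissible_potential UNIV c1 M lam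
      (\<lambda>\<sigma>. if \<sigma> \<le> s then M * (\<sigma> - s) else c1 * integral {s..\<sigma>} lam)"
    using lam_int lower_rate_le_upper_rate
    by (intro admissible_glue admissible_linear admissible_integral_from) auto
  show "SigmaP c1 M lam s \<sigma>
      = exp (if \<sigma> \<le> s then M * (\<sigma> - s) else c1 * integral {s..\<sigma>} lam)" for \<sigma>
    by (auto simp: SigmaP_def set_lebesgue_integral_eq_integral[OF lam_meas lam_bounds])
qed

lemma SigmaM_admissible:
  "\<exists>\<Phi>. admissible_potential UNIV c1 M lam \<Phi> \<and> (\<forall>\<sigma>. SigmaM c1 M lam \<sigma> s = exp (\<Phi> \<sigma>))"
proof (intro exI conjI allI)
  show "admissible_potential UNIV c1 M lam
      (\<lambda>\<sigma>. if \<sigma> \<le> s then - (c1 * integral {\<sigma>..s} lam) else M * (\<sigma> - s))"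
    using lam_int lower_rate_le_upper_rate
    by (intro admissible_glue admissible_linear admissible_integral_to) auto
  show "SigmaM c1 M lam \<sigma> s
      = exp (if \<sigma> \<le> s then - (c1 * integral {\<sigma>..s} lam) else M * (\<sigma> - s))" for \<sigma>
    by (auto simp: SigmaM_def set_lebesgue_integral_eq_integral[OF lam_meas lam_bounds] algebra_simps)
qed

end

lemma kernel_constant_bound:
  fixes c1 c2 L M :: real
  assumes c1: "c1 > 0" and c2: "c2 > 0" and small: "c1 * L \<le> 1 / 2" and "0 \<le> L / M"
  shows "(1 / c2 + L + 1 / c1) * (1 / c1 + 1 / c2) \<le> 2 * (3 * L / M + 1 / c1 + 1 / c2)\<^sup>2"
proof -
  define u v where "u = 1 / c1" and "v = 1 / c2"
  define p where "p = u + v"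
  have p: "0 \<le> p" using c1 c2 by (simp add: p_def u_def v_def)
  have "L \<le> u / 2" using small c1 by (simp add: u_def field_simps)
  moreover have "0 \<le> v" using c2 by (simp add: v_def)
  ultimately have "v + L + u \<le> 3 / 2 * p" unfolding p_def by (simp add: field_simps)
  then have "(v + L + u) * p \<le> 3 / 2 * p * p" using p by (rule mult_right_mono)
  also have "\<dots> \<le> 2 * p\<^sup>2" using p by (simp add: power2_eq_square)
  also have "\<dots> \<le> 2 * (3 * L / M + p)\<^sup>2"
    using p \<open>0 \<le> L / M\<close> by (simp add: power_mono)
  finally show ?thesis by (simp add: p_def u_def v_def add.assoc)
qed

theorem lemma3p6:
  fixes N :: nat and \<Lambda>0 c1 c2 M c s t :: real and lam :: "real \<Rightarrow> real"
  assumes "N \<ge> 2" and "\<Lambda>0 > 0"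
    and "lam \<in> borel_measurable borel"
    and "antimono lam"
    and "\<And>x. 0 \<le> lam x \<and> lam x \<le> \<Lambda>0"
    and "c1 > 0" and "c2 > 0"
    and "c1 * \<Lambda>0 \<le> 1/2" and "c2 * \<Lambda>0 \<le> (real N - 1) / 2"
    and "M = real N - c2 * \<Lambda>0"
    and "c = 2 * (3 * \<Lambda>0 / M + 1 / c1 + 1 / c2)\<^sup>2"
  shows "((\<integral>\<^sup>+ \<tau>. (\<integral>\<^sup>+ \<sigma>. ennreal (Ekern3 N lam t \<tau> \<sigma> * SigmaP c1 M lam s \<sigma>) \<partial>lborel) \<partial>lborel)
           \<le> ennreal (c * SigmaP c1 M lam s t))
         \<and> ((\<integral>\<^sup>+ \<tau>. (\<integral>\<^sup>+ \<sigma>. ennreal (Ekern3 N lam t \<tau> \<sigma> * SigmaM c1 M lam \<sigma> s) \<partial>lborel) \<partial>lborel)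
           \<le> ennreal (c * SigmaM c1 M lam t s))"
proof -
  have lam_int: "\<And>x y. lam integrable_on {x..y}"
    using assms(4) by (rule antimono_integrable_on)
  have lam_nonneg: "\<And>x. 0 \<le> lam x" and lam_le: "\<And>x. lam x \<le> \<Lambda>0"
    using assms(5) by auto
  have M: "3 / 2 \<le> M" and gap: "M < real N" and rates: "c1 * \<Lambda>0 \<le> M"
    using assms(1,2,7-10) by auto
  have ratio: "\<Lambda>0 / (real N - M) = 1 / c2"
    using assms(2,10) by simp
  have bound: "(\<integral>\<^sup>+\<tau>. (\<integral>\<^sup>+\<sigma>. ennreal (Ekern3 N lam t \<tau> \<sigma> * exp (\<Phi> \<sigma>)) \<partial>lborel) \<partial>lborel)
      \<le> ennreal (c * exp (\<Phi> t))" if "admissible_potential UNIV c1 M lam \<Phi>" for \<Phi>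
  proof -
    have "(\<integral>\<^sup>+\<tau>. (\<integral>\<^sup>+\<sigma>. ennreal (Ekern3 N lam t \<tau> \<sigma> * exp (\<Phi> \<sigma>)) \<partial>lborel) \<partial>lborel)
        \<le> ennreal ((1 / c2 + \<Lambda>0 + 1 / c1) * (1 / c1 + 1 / c2) * exp (\<Phi> t))"
      using kernel_double_integral[OF lam_nonneg assms(3) lam_int lam_le assms(6) gap that]
      by (simp add: ratio)
    also have "\<dots> \<le> ennreal (c * exp (\<Phi> t))"
      using kernel_constant_bound[OF assms(6,7,8)] M assms(2,11)
      by (intro ennreal_leI mult_right_mono) auto
    finally show ?thesis .
  qed
  obtain \<Phi>p where "admissible_potential UNIV c1 M lam \<Phi>p" "\<And>\<sigma>. SigmaP c1 M lam s \<sigma> = exp (\<Phi>p \<sigma>)"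
    using SigmaP_admissible[OF assms(3,5) lam_int _ rates] assms(6) by auto
  moreover obtain \<Phi>m where "admissible_potential UNIV c1 M lam \<Phi>m" "\<And>\<sigma>. SigmaM c1 M lam \<sigma> s = exp (\<Phi>m \<sigma>)"
    using SigmaM_admissible[OF assms(3,5) lam_int _ rates] assms(6) by auto
  ultimately show ?thesis
    using bound by simp
qed

end
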